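(* Assume (H), let $\mu_0$ be a probability measure on $\mathbb R^d$ with bounded support and $\eta\sim\mu_0$, $K:=\sup_\omega\|\eta(\omega)\|_2<\infty$. Then for every $t\in(0,T)$ and all $x,y\in\mathbb R^d$, $$\langle x-y,\,b^{\mu_0}_t(x)-b^{\mu_0}_t(y)\rangle\le\frac{\sigma_t'}{\sigma_t}\,\|x-y\|_2^2\Big[1-\frac{\beta_tK^2}{\sigma_t^2}\Big].$$
   Context: Fix $d\in\mathbb N$ and $T\in(0,\infty]$. Assumption (H): $\sigma:[0,T)\to(0,\infty)$ is continuous, strictly decreasing and differentiable with derivative $\sigma'_t$ bounded on $[0,t_0]$ for every $t_0<T$, $\sigma_0=1$, $\lim_{t\uparrow T}\sigma_t=0$; and $\beta_t:=1-\sigma_t$. $\Gamma_t(x,y):=\|x-\beta_ty\|_2^2/(2\sigma_t^2)$, $\mathcal D^{\mu_0}_t(x):=\mathbb E[\eta e^{-\Gamma_t(x,\eta)}]/\mathbb E[e^{-\Gamma_t(x,\eta)}]$ (expectation over $\eta\sim\mu_0$), and $b^{\mu_0}_t(x):=\frac{\sigma_t'}{\sigma_t}\big(x-\mathcal D^{\mu_0}_t(x)\big)$. *)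

theory Defs
  imports "HOL-Probability.Probability"
begin

definition time_dom :: "ereal \<Rightarrow> real set" where
  "time_dom T = {t. 0 \<le> t \<and> ereal t < T}"

definition to_T :: "ereal \<Rightarrow> real filter" where
  "to_T T = (case T of ereal r \<Rightarrow> at_left r | PInfty \<Rightarrow> at_top | MInfty \<Rightarrow> bot)"

definition hypH :: "(real \<Rightarrow> real) \<Rightarrow> (real \<Rightarrow> real) \<Rightarrow> ereal \<Rightarrow> bool" where
  "hypH \<sigma> \<sigma>' T \<longleftrightarrow>
     0 < T \<and>
     (\<forall>t\<in>time_dom T. 0 < \<sigma> t) \<and>
     continuous_on (time_dom T) \<sigma> \<and>
     (\<forall>s\<in>time_dom T. \<forall>t\<in>time_dom T. s < t \<longrightarrow> \<sigma> t < \<sigma> s) \<and>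
     (\<forall>t\<in>time_dom T. (\<sigma> has_real_derivative \<sigma>' t) (at t within time_dom T)) \<and>
     (\<forall>t0\<in>time_dom T. bounded (\<sigma>' ` {0..t0})) \<and>
     \<sigma> 0 = 1 \<and>
     (\<sigma> \<longlongrightarrow> 0) (to_T T)"

definition beta :: "(real \<Rightarrow> real) \<Rightarrow> real \<Rightarrow> real" where
  "beta \<sigma> t = 1 - \<sigma> t"

definition Gam :: "(real \<Rightarrow> real) \<Rightarrow> real \<Rightarrow> 'v::euclidean_space \<Rightarrow> 'v \<Rightarrow> real" where
  "Gam \<sigma> t x y = (norm (x - beta \<sigma> t *\<^sub>R y))\<^sup>2 / (2 * (\<sigma> t)\<^sup>2)"

definition Dmu :: "'a measure \<Rightarrow> ('a \<Rightarrow> 'v::euclidean_space) \<Rightarrow> (real \<Rightarrow> real) \<Rightarrow> real \<Rightarrow> 'v \<Rightarrow> 'v" where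
  "Dmu M \<eta> \<sigma> t x =
     (1 / (\<integral>\<omega>. exp (- Gam \<sigma> t x (\<eta> \<omega>)) \<partial>M)) *\<^sub>R
     (\<integral>\<omega>. exp (- Gam \<sigma> t x (\<eta> \<omega>)) *\<^sub>R \<eta> \<omega> \<partial>M)"

definition bmu :: "'a measure \<Rightarrow> ('a \<Rightarrow> 'v::euclidean_space) \<Rightarrow> (real \<Rightarrow> real) \<Rightarrow> (real \<Rightarrow> real) \<Rightarrow> real \<Rightarrow> 'v \<Rightarrow> 'v" where
  "bmu M \<eta> \<sigma> \<sigma>' t x = (\<sigma>' t / \<sigma> t) *\<^sub>R (x - Dmu M \<eta> \<sigma> t x)"

end

theory Submission
  imports Defs
begin

text \<open>
  Put \<open>v = x - y\<close>. Completing the square in \<open>\<Gamma>\<^sub>t(x, \<cdot>)\<close> shows that \<open>\<langle>v, D\<^sub>t(x)\<rangle>\<close> is the mean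
  of \<open>u = \<langle>v, \<eta>\<rangle>\<close> under the law \<open>\<mu>\<^sub>0\<close> reweighted by \<open>w = exp (-\<Gamma>\<^sub>t(y, \<cdot>))\<close> and exponentially
  tilted by \<open>exp (a u)\<close> with \<open>a = \<beta>\<^sub>t / \<sigma>\<^sub>t\<^sup>2\<close>, while \<open>\<langle>v, D\<^sub>t(y)\<rangle>\<close> is the untilted mean. The
  tilted mean is increasing in the tilt with derivative the tilted variance, at most
  \<open>R\<^sup>2 = (\<parallel>v\<parallel> K)\<^sup>2\<close>, so the two means differ by at most \<open>a R\<^sup>2\<close>; since \<open>\<sigma>'\<^sub>t \<le> 0\<close> this is the claim.
  Instead of differentiating under the integral we compare two tilts \<open>s\<close> and \<open>s + \<delta>\<close> directly:
  symmetrising the two-point kernel and using \<open>d (e\<^sup>d - 1) \<le> d\<^sup>2/2 (e\<^sup>d + 1)\<close> bounds each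
  increment by \<open>\<delta> R\<^sup>2 / (1 - \<delta> R)\<close>, and summing \<open>n\<close> such steps and letting \<open>n \<rightarrow> \<infinity>\<close> gives
  the variance bound.
\<close>

lemma exp_diff_le_trapezoid:
  fixes e :: real
  assumes "0 \<le> e"
  shows "exp e - 1 \<le> e / 2 * (exp e + 1)"
proof -
  define g where "g z = z / 2 * (exp z + 1) - (exp z - 1)" for z :: real
  have "g 0 \<le> g e"
  proof (rule DERIV_nonneg_imp_nondecreasing[OF assms])
    fix z :: real
    have "exp z * (1 - z) \<le> exp z * exp (- z)"
      using exp_ge_add_one_self[of "- z"] by (intro mult_left_mono) auto
    then have "0 \<le> (1 - exp z) / 2 + z * exp z / 2"
      by (simp add: exp_minus field_simps)
    moreover have "(g has_real_derivative (1 - exp z) / 2 + z * exp z / 2) (at z)"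
      unfolding g_def by (rule derivative_eq_intros refl | simp add: field_simps)+
    ultimately show "\<exists>y. (g has_real_derivative y) (at z) \<and> 0 \<le> y" by blast
  qed
  then show ?thesis by (simp add: g_def)
qed

lemma mult_exp_minus_one_le:
  fixes d :: real
  shows "d * (exp d - 1) \<le> d\<^sup>2 / 2 * (exp d + 1)"
proof (cases "0 \<le> d")
  case True
  then show ?thesis
    using mult_left_mono[OF exp_diff_le_trapezoid[OF True] True]
    by (simp add: power2_eq_square field_simps)
next
  case False
  then have "0 \<le> - d" by simp
  from mult_left_mono[OF exp_diff_le_trapezoid[OF this] this]
  have "exp d * (- d * (exp (- d) - 1)) \<le> exp d * (- d * (- d / 2 * (exp (- d) + 1)))"
    by (rule mult_left_mono) simp_all
  then show ?thesis
    by (simp add: power2_eq_square algebra_simps flip: exp_add) (simp add: field_simps)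
qed

lemma diff_mult_exp_diff_le:
  fixes p q \<delta> :: real
  assumes "0 \<le> \<delta>"
  shows "(p - q) * (exp (\<delta> * p) - exp (\<delta> * q)) \<le> \<delta> / 2 * (p - q)\<^sup>2 * (exp (\<delta> * p) + exp (\<delta> * q))"
proof (cases "\<delta> = 0")
  case False
  then have "0 < \<delta>" using assms by simp
  have "exp (\<delta> * p) = exp (\<delta> * (p - q)) * exp (\<delta> * q)"
    by (simp flip: exp_add add: algebra_simps)
  with mult_right_mono[OF mult_exp_minus_one_le[of "\<delta> * (p - q)"], of "exp (\<delta> * q)"]
  have "\<delta> * ((p - q) * (exp (\<delta> * p) - exp (\<delta> * q)))
      \<le> \<delta> * (\<delta> / 2 * (p - q)\<^sup>2 * (exp (\<delta> * p) + exp (\<delta> * q)))"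
    by (simp add: power2_eq_square algebra_simps)
  then show ?thesis by (simp only: mult_le_cancel_left_pos[OF \<open>0 < \<delta>\<close>])
qed simp

lemma diff_le_of_quadratic_bound:
  fixes x y q1 q2 \<delta> R :: real
  assumes h: "x - y \<le> \<delta> / 2 * (q1 - 2 * x * y + q2)"
    and q: "q1 \<le> R\<^sup>2" "q2 \<le> R\<^sup>2" and xy: "\<bar>x\<bar> \<le> R" "\<bar>y\<bar> \<le> R"
    and \<delta>: "0 \<le> \<delta>" "\<delta> * R \<le> 1"
  shows "(x - y) * (1 - \<delta> * R) \<le> \<delta> * R\<^sup>2"
proof -
  have "q1 - 2 * x * y + q2 \<le> 2 * R\<^sup>2 + (x - y)\<^sup>2"
    unfolding power2_diff using q zero_le_power2[of x] zero_le_power2[of y] by linarith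
  then have quad: "x - y \<le> \<delta> * R\<^sup>2 + \<delta> / 2 * (x - y)\<^sup>2"
    using h mult_left_mono[of _ _ "\<delta> / 2"] \<delta>(1) by (fastforce simp: algebra_simps)
  show ?thesis
  proof (cases "x - y \<le> 0")
    case True
    then have "(x - y) * (1 - \<delta> * R) \<le> 0" using \<delta> by (simp add: mult_nonpos_nonneg)
    moreover have "0 \<le> \<delta> * R\<^sup>2" using \<delta> by simp
    ultimately show ?thesis by linarith
  next
    case False
    \<comment> \<open>\<open>(x - y)\<^sup>2 \<le> 2 R (x - y)\<close> turns the quadratic remainder into a linear one\<close>
    have "(x - y)\<^sup>2 \<le> 2 * R * (x - y)"
      using False xy by (simp add: power2_eq_square mult_right_mono)
    with quad have "x - y \<le> \<delta> * R\<^sup>2 + \<delta> * R * (x - y)"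
      using mult_left_mono[of _ _ "\<delta> / 2"] \<delta>(1) by fastforce
    then show ?thesis by (simp add: algebra_simps)
  qed
qed

lemma (in pair_sigma_finite) integrable_pair_mult:
  fixes f :: "'a \<Rightarrow> real" and g :: "'b \<Rightarrow> real"
  assumes "integrable M1 f" "integrable M2 g"
  shows "integrable (M1 \<Otimes>\<^sub>M M2) (\<lambda>(x, y). f x * g y)"
proof (rule Fubini_integrable)
  show "(\<lambda>(x, y). f x * g y) \<in> borel_measurable (M1 \<Otimes>\<^sub>M M2)"
    using assms by measurable
  show "integrable M1 (\<lambda>x. \<integral>y. norm (case (x, y) of (x, y) \<Rightarrow> f x * g y) \<partial>M2)"
    using assms by (simp add: abs_mult)
  show "AE x in M1. integrable M2 (\<lambda>y. case (x, y) of (x, y) \<Rightarrow> f x * g y)"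
    using assms by simp
qed

lemma (in pair_sigma_finite) integral_pair_mult:
  fixes f :: "'a \<Rightarrow> real" and g :: "'b \<Rightarrow> real"
  assumes "integrable M1 f" "integrable M2 g"
  shows "(\<integral>(x, y). f x * g y \<partial>(M1 \<Otimes>\<^sub>M M2)) = integral\<^sup>L M1 f * integral\<^sup>L M2 g"
  using integral_fst'[OF integrable_pair_mult[OF assms]] by simp

lemma (in sigma_finite_measure) integral_pair_nonpos_of_swap_sum_nonpos:
  fixes k :: "'a \<times> 'a \<Rightarrow> real"
  assumes int: "integrable (M \<Otimes>\<^sub>M M) k"
    and sym: "\<And>x y. x \<in> space M \<Longrightarrow> y \<in> space M \<Longrightarrow> k (x, y) + k (y, x) \<le> 0"
  shows "integral\<^sup>L (M \<Otimes>\<^sub>M M) k \<le> 0"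
proof -
  interpret pair_sigma_finite M M ..
  have int_swap: "integrable (M \<Otimes>\<^sub>M M) (\<lambda>(x, y). k (y, x))"
    using int integrable_product_swap by blast
  have "integral\<^sup>L (M \<Otimes>\<^sub>M M) k = (\<integral>(x, y). k (y, x) \<partial>(M \<Otimes>\<^sub>M M))"
    using integral_product_swap[of k] int by simp
  then have "2 * integral\<^sup>L (M \<Otimes>\<^sub>M M) k = (\<integral>z. k z + k (snd z, fst z) \<partial>(M \<Otimes>\<^sub>M M))"
    using int int_swap by (simp add: split_beta' integral_add)
  moreover have "0 \<le> (\<integral>z. - (k z + k (snd z, fst z)) \<partial>(M \<Otimes>\<^sub>M M))"
    using sym by (intro integral_nonneg_AE AE_I2) (force simp: space_pair_measure add_eq_0_iff)
  ultimately show ?thesis by (simp only: integral_minus)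
qed

locale exponential_tilting = prob_space M for M :: "'a measure" +
  fixes u w :: "'a \<Rightarrow> real" and R :: real
  assumes u_measurable [measurable]: "u \<in> borel_measurable M"
    and integrable_w: "integrable M w"
    and abs_u_le: "\<And>\<omega>. \<omega> \<in> space M \<Longrightarrow> \<bar>u \<omega>\<bar> \<le> R"
    and w_pos: "\<And>\<omega>. \<omega> \<in> space M \<Longrightarrow> 0 < w \<omega>"
begin

definition tilted :: "real \<Rightarrow> 'a \<Rightarrow> real" where
  "tilted s \<omega> = exp (s * u \<omega>) * w \<omega>"

definition moment :: "nat \<Rightarrow> real \<Rightarrow> real" where
  "moment k s = (\<integral>\<omega>. u \<omega> ^ k * tilted s \<omega> \<partial>M)"

definition tilted_mean :: "real \<Rightarrow> real" where
  "tilted_mean s = moment 1 s / moment 0 s"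

lemma tilted_pos: "\<omega> \<in> space M \<Longrightarrow> 0 < tilted s \<omega>"
  unfolding tilted_def using w_pos by simp

lemma integrable_moment: "integrable M (\<lambda>\<omega>. u \<omega> ^ k * tilted s \<omega>)"
proof (rule Bochner_Integration.integrable_bound)
  show "integrable M (\<lambda>\<omega>. R ^ k * exp (\<bar>s\<bar> * R) * w \<omega>)"
    using integrable_w by simp
  show "(\<lambda>\<omega>. u \<omega> ^ k * tilted s \<omega>) \<in> borel_measurable M"
    using borel_measurable_integrable[OF integrable_w] unfolding tilted_def by measurable
  show "AE \<omega> in M. norm (u \<omega> ^ k * tilted s \<omega>) \<le> norm (R ^ k * exp (\<bar>s\<bar> * R) * w \<omega>)"
  proof (rule AE_I2)
    fix \<omega> assume \<omega>: "\<omega> \<in> space M"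
    have "s * u \<omega> \<le> \<bar>s\<bar> * \<bar>u \<omega>\<bar>"
      by (simp flip: abs_mult)
    also have "\<dots> \<le> \<bar>s\<bar> * R"
      using abs_u_le[OF \<omega>] by (intro mult_left_mono) auto
    finally have "s * u \<omega> \<le> \<bar>s\<bar> * R" .
    then have "exp (s * u \<omega>) * w \<omega> \<le> exp (\<bar>s\<bar> * R) * w \<omega>"
      using w_pos[OF \<omega>] by (intro mult_right_mono) auto
    moreover have "\<bar>u \<omega>\<bar> ^ k \<le> R ^ k"
      using abs_u_le[OF \<omega>] by (intro power_mono) auto
    ultimately have "\<bar>u \<omega>\<bar> ^ k * (exp (s * u \<omega>) * w \<omega>) \<le> R ^ k * (exp (\<bar>s\<bar> * R) * w \<omega>)"
      using w_pos[OF \<omega>] abs_u_le[OF \<omega>] by (intro mult_mono) auto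
    then show "norm (u \<omega> ^ k * tilted s \<omega>) \<le> norm (R ^ k * exp (\<bar>s\<bar> * R) * w \<omega>)"
      using w_pos[OF \<omega>] abs_u_le[OF \<omega>] unfolding tilted_def
      by (simp add: abs_mult power_abs mult.assoc)
  qed
qed

lemma moment_0_pos: "0 < moment 0 s"
proof -
  have "integrable M (tilted s)" and nonneg: "AE \<omega> in M. 0 \<le> tilted s \<omega>"
    using integrable_moment[of 0 s] tilted_pos[of _ s] by (auto intro!: AE_I2 less_imp_le)
  moreover have "\<not> (AE \<omega> in M. tilted s \<omega> = 0)"
  proof
    assume "AE \<omega> in M. tilted s \<omega> = 0"
    moreover have "AE \<omega> in M. tilted s \<omega> \<noteq> 0"
      using tilted_pos[of _ s] by (intro AE_I2) (metis less_irrefl)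
    ultimately have "AE \<omega> in M. False" by eventually_elim simp
    then show False by (simp add: AE_False)
  qed
  ultimately have "integral\<^sup>L M (tilted s) \<noteq> 0" using integral_nonneg_eq_0_iff_AE by blast
  moreover have "0 \<le> integral\<^sup>L M (tilted s)" using nonneg by (rule integral_nonneg_AE)
  ultimately show ?thesis unfolding moment_def by simp
qed

lemma abs_moment_le: "\<bar>moment k s\<bar> \<le> R ^ k * moment 0 s"
proof -
  have "\<bar>moment k s\<bar> \<le> (\<integral>\<omega>. \<bar>u \<omega> ^ k * tilted s \<omega>\<bar> \<partial>M)"
    unfolding moment_def by (rule integral_abs_bound)
  also have "\<dots> \<le> (\<integral>\<omega>. R ^ k * tilted s \<omega> \<partial>M)"
    using integrable_moment[of 0 s] integrable_moment[of k s] abs_u_le tilted_pos[of _ s]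
    by (intro integral_mono integrable_abs)
       (auto simp: abs_mult power_abs less_imp_le intro!: mult_right_mono power_mono)
  finally show ?thesis unfolding moment_def by simp
qed

lemma tilted_add: "tilted (s + \<delta>) \<omega> = exp (\<delta> * u \<omega>) * tilted s \<omega>"
  unfolding tilted_def by (simp add: distrib_right exp_add)

text \<open>A discrete form of the identity (tilted mean)' = tilted variance.\<close>

lemma moment_cross_le:
  assumes "0 \<le> \<delta>"
  shows "moment 1 (s + \<delta>) * moment 0 s - moment 0 (s + \<delta>) * moment 1 s
    \<le> \<delta> / 2 * (moment 2 (s + \<delta>) * moment 0 s - 2 * (moment 1 (s + \<delta>) * moment 1 s)
              + moment 0 (s + \<delta>) * moment 2 s)"
proof -
  have pair: "pair_sigma_finite M M" ..
  define m where "m k t \<omega> = u \<omega> ^ k * tilted t \<omega>" for k t \<omega>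
  define \<kappa> where "\<kappa> = (\<lambda>(x, y). tilted (s + \<delta>) x * tilted s y * ((u x - u y) - \<delta> / 2 * (u x - u y)\<^sup>2))"
  define p where "p j t k t' = (\<lambda>(x, y). m j t x * m k t' y)" for j t k t'
  have int: "integrable (M \<Otimes>\<^sub>M M) (p j t k t')" for j k t t'
    unfolding p_def m_def by (intro pair_sigma_finite.integrable_pair_mult[OF pair] integrable_moment)
  have moment_prod: "integral\<^sup>L (M \<Otimes>\<^sub>M M) (p j t k t') = moment j t * moment k t'" for j k t t'
    unfolding p_def m_def moment_def by (intro pair_sigma_finite.integral_pair_mult[OF pair] integrable_moment)
  have "\<kappa> = (\<lambda>z. p 1 (s + \<delta>) 0 s z - p 0 (s + \<delta>) 1 s z
      - \<delta> / 2 * (p 2 (s + \<delta>) 0 s z - 2 * p 1 (s + \<delta>) 1 s z + p 0 (s + \<delta>) 2 s z))"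
    by (auto simp: \<kappa>_def p_def m_def fun_eq_iff power2_eq_square algebra_simps)
  then have int_\<kappa>: "integrable (M \<Otimes>\<^sub>M M) \<kappa>"
    and integral_\<kappa>: "integral\<^sup>L (M \<Otimes>\<^sub>M M) \<kappa> = moment 1 (s + \<delta>) * moment 0 s - moment 0 (s + \<delta>) * moment 1 s
      - \<delta> / 2 * (moment 2 (s + \<delta>) * moment 0 s - 2 * (moment 1 (s + \<delta>) * moment 1 s)
                 + moment 0 (s + \<delta>) * moment 2 s)"
    by (simp_all add: int moment_prod del: One_nat_def)
  have swap_sum: "\<kappa> (x, y) + \<kappa> (y, x) \<le> 0" if "x \<in> space M" "y \<in> space M" for x y
  proof -
    have "\<kappa> (x, y) + \<kappa> (y, x) = tilted s x * tilted s y *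
        ((u x - u y) * (exp (\<delta> * u x) - exp (\<delta> * u y))
         - \<delta> / 2 * (u x - u y)\<^sup>2 * (exp (\<delta> * u x) + exp (\<delta> * u y)))"
      unfolding \<kappa>_def tilted_add[of s \<delta>] by (simp add: power2_eq_square field_simps)
    moreover have "0 \<le> tilted s x * tilted s y"
      using tilted_pos[OF that(1), of s] tilted_pos[OF that(2), of s] by simp
    ultimately show ?thesis
      using diff_mult_exp_diff_le[OF assms, of "u x" "u y"] by (simp add: mult_nonneg_nonpos)
  qed
  have "integral\<^sup>L (M \<Otimes>\<^sub>M M) \<kappa> \<le> 0"
    using int_\<kappa> swap_sum by (rule integral_pair_nonpos_of_swap_sum_nonpos)
  then show ?thesis unfolding integral_\<kappa> by simp
qed

lemma abs_tilted_mean_le: "\<bar>tilted_mean s\<bar> \<le> R"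
  using abs_moment_le[of 1 s] moment_0_pos[of s]
  by (simp add: tilted_mean_def abs_divide pos_divide_le_eq)

lemma moment_2_div_le: "moment 2 s / moment 0 s \<le> R\<^sup>2"
  using abs_moment_le[of 2 s] moment_0_pos[of s] by (simp add: pos_divide_le_eq)

lemma tilted_mean_step:
  assumes \<delta>: "0 \<le> \<delta>" "\<delta> * R \<le> 1"
  shows "(tilted_mean (s + \<delta>) - tilted_mean s) * (1 - \<delta> * R) \<le> \<delta> * R\<^sup>2"
proof (rule diff_le_of_quadratic_bound[OF _ moment_2_div_le moment_2_div_le
      abs_tilted_mean_le abs_tilted_mean_le \<delta>])
  have pos: "0 < moment 0 (s + \<delta>) * moment 0 s"
    using moment_0_pos by simp
  have "tilted_mean (s + \<delta>) - tilted_mean s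
      = (moment 1 (s + \<delta>) * moment 0 s - moment 0 (s + \<delta>) * moment 1 s) / (moment 0 (s + \<delta>) * moment 0 s)"
    using moment_0_pos[of s] moment_0_pos[of "s + \<delta>"] by (simp add: tilted_mean_def field_simps)
  also have "\<dots> \<le> \<delta> / 2 * (moment 2 (s + \<delta>) * moment 0 s - 2 * (moment 1 (s + \<delta>) * moment 1 s)
              + moment 0 (s + \<delta>) * moment 2 s) / (moment 0 (s + \<delta>) * moment 0 s)"
    using pos moment_cross_le[OF \<delta>(1)] by (intro divide_right_mono) auto
  also have "\<dots> = \<delta> / 2 * (moment 2 (s + \<delta>) / moment 0 (s + \<delta>)
      - 2 * tilted_mean (s + \<delta>) * tilted_mean s + moment 2 s / moment 0 s)"
    using moment_0_pos[of s] moment_0_pos[of "s + \<delta>"] by (simp add: tilted_mean_def field_simps)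
  finally show "tilted_mean (s + \<delta>) - tilted_mean s \<le> \<delta> / 2 * (moment 2 (s + \<delta>) / moment 0 (s + \<delta>)
      - 2 * tilted_mean (s + \<delta>) * tilted_mean s + moment 2 s / moment 0 s)" .
qed

lemma tilted_mean_increment_le:
  assumes "0 \<le> a"
  shows "tilted_mean (s + a) - tilted_mean s \<le> a * R\<^sup>2"
proof -
  let ?D = "tilted_mean (s + a) - tilted_mean s"
  obtain N :: nat where N: "a * R \<le> real N" using real_arch_simple by blast
  have "?D * (1 - a * R / real n) \<le> a * R\<^sup>2" if n: "Suc N \<le> n" for n
  proof -
    define \<delta> where "\<delta> = a / real n"
    have n0: "0 < real n" using n by simp
    have "\<delta> * real n = a" using n0 by (simp add: \<delta>_def)
    have \<delta>: "0 \<le> \<delta>" "\<delta> * R \<le> 1"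
      using assms n N n0 by (auto simp: \<delta>_def field_simps)
    have "?D = (\<Sum>i<n. tilted_mean (s + \<delta> * real i + \<delta>) - tilted_mean (s + \<delta> * real i))"
      using sum_lessThan_telescope[of "\<lambda>i. tilted_mean (s + \<delta> * real i)" n] n0
      by (simp add: \<open>\<delta> * real n = a\<close> algebra_simps)
    then have "?D * (1 - \<delta> * R)
        = (\<Sum>i<n. (tilted_mean (s + \<delta> * real i + \<delta>) - tilted_mean (s + \<delta> * real i)) * (1 - \<delta> * R))"
      by (simp only: sum_distrib_right)
    also have "\<dots> \<le> (\<Sum>i<n. \<delta> * R\<^sup>2)"
      by (intro sum_mono tilted_mean_step \<delta>)
    also have "\<dots> = a * R\<^sup>2" using n0 by (simp add: \<delta>_def)
    finally show ?thesis by (simp add: \<delta>_def)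
  qed
  then have "\<forall>\<^sub>F n in sequentially. ?D * (1 - a * R / real n) \<le> a * R\<^sup>2"
    by (auto simp: eventually_sequentially)
  moreover have "(\<lambda>n. ?D * (1 - a * R / real n)) \<longlonglongrightarrow> ?D"
    by (auto intro!: tendsto_eq_intros lim_const_over_n)
  ultimately show ?thesis by (intro tendsto_upperbound) auto
qed

end

lemma has_real_derivative_nonpos_if_antimono:
  fixes f :: "real \<Rightarrow> real"
  assumes der: "(f has_real_derivative l) (at x within {a..b})" and x: "a < x" "x \<le> b"
    and anti: "\<And>s t. s \<in> {a..b} \<Longrightarrow> t \<in> {a..b} \<Longrightarrow> s \<le> t \<Longrightarrow> f t \<le> f s"
  shows "l \<le> 0"
proof (rule ccontr)
  assume "\<not> l \<le> 0"
  then obtain d where d: "0 < d" "\<And>h. 0 < h \<Longrightarrow> x - h \<in> {a..b} \<Longrightarrow> h < d \<Longrightarrow> f (x - h) < f x"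
    using has_real_derivative_pos_inc_left[OF der] by force
  define h where "h = min (d / 2) (x - a)"
  have "0 < h" "h < d" "x - h \<in> {a..b}" using d x by (auto simp: h_def)
  with d(2) anti[of "x - h" x] x show False by force
qed

lemma hypH_at:
  assumes H: "hypH \<sigma> \<sigma>' T" and t: "0 < t" "ereal t < T"
  shows "0 < \<sigma> t" "\<sigma> t < 1" "\<sigma>' t \<le> 0"
proof -
  have sub: "{0..t} \<subseteq> time_dom T"
    using t by (auto simp: time_dom_def intro: le_less_trans[of _ "ereal t"])
  then have "0 \<in> time_dom T" "t \<in> time_dom T" using t by auto
  then show "0 < \<sigma> t" "\<sigma> t < 1"
    using H t unfolding hypH_def by auto
  have "(\<sigma> has_real_derivative \<sigma>' t) (at t within {0..t})"
    using H \<open>t \<in> time_dom T\<close> sub unfolding hypH_def by (blast intro: has_field_derivative_subset)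
  moreover have "\<sigma> s' \<le> \<sigma> s" if "s \<in> {0..t}" "s' \<in> {0..t}" "s \<le> s'" for s s'
  proof -
    have "s \<in> time_dom T" "s' \<in> time_dom T" using that sub by auto
    then show ?thesis using H that(3) unfolding hypH_def by (cases "s = s'") (auto intro: less_imp_le)
  qed
  ultimately show "\<sigma>' t \<le> 0"
    using t by (intro has_real_derivative_nonpos_if_antimono) auto
qed

lemma Gam_add_left:
  assumes "\<sigma> t \<noteq> 0"
  shows "Gam \<sigma> t (y + v) e = Gam \<sigma> t y e - beta \<sigma> t / (\<sigma> t)\<^sup>2 * inner v e
    + (2 * inner v y + (norm v)\<^sup>2) / (2 * (\<sigma> t)\<^sup>2)"
  using assms unfolding Gam_def power2_norm_eq_inner
  by (simp add: inner_simps inner_commute field_simps)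

lemma inner_Dmu:
  assumes "integrable M (\<lambda>\<omega>. exp (- Gam \<sigma> t z (\<eta> \<omega>)) *\<^sub>R \<eta> \<omega>)"
  shows "inner v (Dmu M \<eta> \<sigma> t z)
    = (\<integral>\<omega>. inner v (\<eta> \<omega>) * exp (- Gam \<sigma> t z (\<eta> \<omega>)) \<partial>M) / (\<integral>\<omega>. exp (- Gam \<sigma> t z (\<eta> \<omega>)) \<partial>M)"
  unfolding Dmu_def inner_scaleR_right integral_inner_right[OF assms, symmetric]
  by (simp add: mult.commute)

lemma inner_Dmu_diff_le:
  fixes M :: "'a measure" and \<eta> :: "'a \<Rightarrow> 'v::euclidean_space"
  assumes "prob_space M" and meas: "\<eta> \<in> borel_measurable M"
    and K: "\<And>\<omega>. \<omega> \<in> space M \<Longrightarrow> norm (\<eta> \<omega>) \<le> K"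
    and \<sigma>: "\<sigma> t \<noteq> 0" and \<beta>: "0 \<le> beta \<sigma> t"
  shows "inner (x - y) (Dmu M \<eta> \<sigma> t x - Dmu M \<eta> \<sigma> t y) \<le> beta \<sigma> t / (\<sigma> t)\<^sup>2 * (norm (x - y) * K)\<^sup>2"
proof -
  interpret prob_space M by fact
  define v where "v = x - y"
  define u where "u \<omega> = inner v (\<eta> \<omega>)" for \<omega>
  define w where "w \<omega> = exp (- Gam \<sigma> t y (\<eta> \<omega>))" for \<omega>
  define a where "a = beta \<sigma> t / (\<sigma> t)\<^sup>2"
  define C where "C = exp (- ((2 * inner v y + (norm v)\<^sup>2) / (2 * (\<sigma> t)\<^sup>2)))"
  have exp_Gam_le: "exp (- Gam \<sigma> t z e) \<le> 1" for z e :: 'v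
    by (simp add: Gam_def)
  have "u \<in> borel_measurable M" unfolding u_def using meas by measurable
  moreover have "integrable M w"
  proof (rule integrable_const_bound[where B = 1])
    show "AE \<omega> in M. norm (w \<omega>) \<le> 1" using exp_Gam_le by (simp add: w_def)
    show "w \<in> borel_measurable M" unfolding w_def Gam_def using meas by measurable
  qed
  moreover have "\<bar>u \<omega>\<bar> \<le> norm v * K" if "\<omega> \<in> space M" for \<omega>
    using Cauchy_Schwarz_ineq2[of v "\<eta> \<omega>"] K[OF that]
    unfolding u_def by (meson mult_left_mono norm_ge_zero order_trans)
  ultimately interpret exponential_tilting M u w "norm v * K"
    by unfold_locales (simp_all add: w_def)
  have int_z: "integrable M (\<lambda>\<omega>. exp (- Gam \<sigma> t z (\<eta> \<omega>)) *\<^sub>R \<eta> \<omega>)" for z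
  proof (rule integrable_const_bound[where B = K])
    show "AE \<omega> in M. norm (exp (- Gam \<sigma> t z (\<eta> \<omega>)) *\<^sub>R \<eta> \<omega>) \<le> K"
    proof (rule AE_I2)
      fix \<omega> assume "\<omega> \<in> space M"
      then have "exp (- Gam \<sigma> t z (\<eta> \<omega>)) * norm (\<eta> \<omega>) \<le> 1 * K"
        using K exp_Gam_le by (intro mult_mono) auto
      then show "norm (exp (- Gam \<sigma> t z (\<eta> \<omega>)) *\<^sub>R \<eta> \<omega>) \<le> K" by simp
    qed
    show "(\<lambda>\<omega>. exp (- Gam \<sigma> t z (\<eta> \<omega>)) *\<^sub>R \<eta> \<omega>) \<in> borel_measurable M"
      unfolding Gam_def using meas by measurable
  qed
  have "- Gam \<sigma> t x (\<eta> \<omega>)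
      = - ((2 * inner v y + (norm v)\<^sup>2) / (2 * (\<sigma> t)\<^sup>2)) + (a * u \<omega> + - Gam \<sigma> t y (\<eta> \<omega>))" for \<omega>
    using Gam_add_left[of \<sigma> t y v "\<eta> \<omega>", OF \<sigma>] by (simp add: v_def a_def u_def)
  then have x_weight: "exp (- Gam \<sigma> t x (\<eta> \<omega>)) = C * tilted a \<omega>" for \<omega>
    unfolding C_def tilted_def w_def by (simp only: exp_add mult.assoc)
  have "0 < C" by (simp add: C_def)
  have "inner v (Dmu M \<eta> \<sigma> t x) = tilted_mean a"
    using x_weight \<open>0 < C\<close> by (simp add: inner_Dmu[OF int_z] tilted_mean_def moment_def u_def mult.left_commute[of _ C])
  moreover have "inner v (Dmu M \<eta> \<sigma> t y) = tilted_mean 0"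
    by (simp add: inner_Dmu[OF int_z] tilted_mean_def moment_def u_def w_def tilted_def)
  moreover have "0 \<le> a" using \<beta> by (simp add: a_def)
  ultimately show ?thesis
    using tilted_mean_increment_le[of a 0] by (simp add: inner_diff_right v_def a_def)
qed

theorem lemma2p7:
  fixes \<sigma> \<sigma>' :: "real \<Rightarrow> real" and T :: ereal
    and M :: "'a measure" and \<eta> :: "'a \<Rightarrow> 'v::euclidean_space"
    and t :: real and x y :: 'v
  assumes H: "hypH \<sigma> \<sigma>' T"
    and P: "prob_space M"
    and meas: "\<eta> \<in> borel_measurable M"
    and bdd: "bounded (\<eta> ` space M)"
    and t: "0 < t" "ereal t < T"
  defines "K \<equiv> (SUP \<omega>\<in>space M. norm (\<eta> \<omega>))"
  shows "inner (x - y) (bmu M \<eta> \<sigma> \<sigma>' t x - bmu M \<eta> \<sigma> \<sigma>' t y)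
         \<le> (\<sigma>' t / \<sigma> t) * (norm (x - y))\<^sup>2 * (1 - beta \<sigma> t * K\<^sup>2 / (\<sigma> t)\<^sup>2)"
proof -
  note \<sigma> = hypH_at[OF H t]
  have "bdd_above ((\<lambda>\<omega>. norm (\<eta> \<omega>)) ` space M)"
    using bdd by (auto simp: bounded_iff bdd_above_def)
  then have "norm (\<eta> \<omega>) \<le> K" if "\<omega> \<in> space M" for \<omega>
    unfolding K_def using that by (rule cSUP_upper[rotated])
  then have D: "inner (x - y) (Dmu M \<eta> \<sigma> t x - Dmu M \<eta> \<sigma> t y) \<le> beta \<sigma> t / (\<sigma> t)\<^sup>2 * (norm (x - y) * K)\<^sup>2"
    using \<sigma> by (intro inner_Dmu_diff_le[OF P meas]) (auto simp: beta_def)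
  have "\<sigma>' t / \<sigma> t \<le> 0" using \<sigma> by (simp add: divide_nonpos_pos)
  have "inner (x - y) (bmu M \<eta> \<sigma> \<sigma>' t x - bmu M \<eta> \<sigma> \<sigma>' t y)
      = \<sigma>' t / \<sigma> t * ((norm (x - y))\<^sup>2 - inner (x - y) (Dmu M \<eta> \<sigma> t x - Dmu M \<eta> \<sigma> t y))"
    by (simp add: bmu_def power2_norm_eq_inner inner_diff_right algebra_simps)
  also have "\<dots> \<le> \<sigma>' t / \<sigma> t * ((norm (x - y))\<^sup>2 - beta \<sigma> t / (\<sigma> t)\<^sup>2 * (norm (x - y) * K)\<^sup>2)"
    using D \<open>\<sigma>' t / \<sigma> t \<le> 0\<close> by (intro mult_left_mono_neg) auto
  also have "\<dots> = (\<sigma>' t / \<sigma> t) * (norm (x - y))\<^sup>2 * (1 - beta \<sigma> t * K\<^sup>2 / (\<sigma> t)\<^sup>2)"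
    by (simp add: power_mult_distrib algebra_simps)
  finally show ?thesis .
qed

end
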